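(* Let $\mathcal I=\{11,12,21,22\}$ and $i\in\{1,2,3\}$. For every $J\subsetneq\mathcal I$, $$\sum_{I\subseteq\mathcal I}(-1)^{|I|}\pi\big(H_{i,I},\mathfrak C_J(H_{i,I})\big)=0.$$ Moreover, there exist constants $m_0$ and $C>0$ such that if $mp^3\le1$ and $m>m_0$, then $$\Big|\sum_{I\subseteq\mathcal I}(-1)^{|I|}\pi\big(H_{i,I},\mathfrak C_{\mathcal I}(H_{i,I})\big)\Big|\le\begin{cases}C\big(mp^5e^{-4mp^2}+(mp^3)^2e^{-4mp^2}\big),& i=1,3,\\ C\big(mp^4e^{-4mp^2}+(mp^3)^2e^{-4mp^2}\big),& i=2.\end{cases}$$
   Context: Random intersection graph $\mathcal G(n,m,p)$ ($n\ge8$): vertices $v_1,\ldots,v_n$, attributes $a_1,\ldots,a_m$; each vertex chooses each attribute independently with probability $p$; two vertices are adjacent iff they chose a common attribute. For a graph $H$, $\mathcal P(H)$ is the family of subsets of $V(H)$ containing both ends of some edge of $H$; $\mathcal C\subseteq\mathcal P(H)$ is a clique cover if each edge lies in some $C\in\mathcal C$. An attribute builds $C\subseteq V(H)$ if all vertices of $C$ and no vertex of $V(H)\setminus C$ chose it. $H$ is given by the clique cover $\mathcal C$ if each $C\in\mathcal C$ is built by some attribute and no $C\in\mathcal P(H)\setminus\mathcal C$ is built by any attribute; $\pi(H,\mathcal C)$ is its probability, and $\pi(H,\mathfrak C)=\sum_{\mathcal C\in\mathfrak C}\pi(H,\mathcal C)$. Graphs with edges labelled by $\mathcal I$: $G_1$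 is the star with centre $v$ and edges $e_{ab}=\{v,u_{ab}\}$; $G_2$ is the $4$-cycle with edges $e_{ab}=\{x_a,y_b\}$; $G_3$ is the path on $z_{12},x_1,y,x_2,z_{22}$ with $e_{11}=\{x_1,y\}$, $e_{12}=\{x_1,z_{12}\}$, $e_{21}=\{x_2,y\}$, $e_{22}=\{x_2,z_{22}\}$. $G_{i,I}$ is the subgraph of $G_i$ induced by edges $e_{ab}$, $ab\in I$. $H_{i,I}$ is a graph on $8$ vertices of $\{v_1,\ldots,v_n\}$ consisting of a copy of $G_{i,I}$, further pairwise vertex-disjoint edges $e_{ab}$, $ab\in\mathcal I\setminus I$, disjoint from $G_{i,I}$, and isolated vertices. For $J\subseteq\mathcal I$, $\mathfrak C_J(H_{i,I})$ is the family of clique covers of $H_{i,I}$ in which no edge $e_{ab}$ with $ab\in J$ is covered by a $2$-element set and every edge $e_{ab}$ with $ab\in\mathcal I\setminus J$ is covered by a $2$-element set (i.e. $e_{ab}$ itself belongs to the cover). *)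

theory Defs
  imports "HOL-Probability.Probability"
begin

datatype lab = L11 | L12 | L21 | L22

lemma UNIV_lab: "(UNIV :: lab set) = {L11, L12, L21, L22}"
  by (auto intro: lab.exhaust)

instance lab :: finite
  by standard (simp add: UNIV_lab)

text \<open>Template graphs G_1, G_2, G_3 on natural-number vertices, given by their labelled edges.
  G_1: centre v = 0, u11 = 1, u12 = 2, u21 = 3, u22 = 4.
  G_2: x1 = 0, x2 = 1, y1 = 2, y2 = 3, e_ab = {x_a, y_b}.
  G_3: x1 = 0, y = 1, x2 = 2, z12 = 3, z22 = 4.\<close>
definition Gedge :: "nat \<Rightarrow> lab \<Rightarrow> nat set" where
  "Gedge i ab =
    (if i = 1 then (case ab of L11 \<Rightarrow> {0,1} | L12 \<Rightarrow> {0,2} | L21 \<Rightarrow> {0,3} | L22 \<Rightarrow> {0,4})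
     else if i = 2 then (case ab of L11 \<Rightarrow> {0,2} | L12 \<Rightarrow> {0,3} | L21 \<Rightarrow> {1,2} | L22 \<Rightarrow> {1,3})
     else (case ab of L11 \<Rightarrow> {0,1} | L12 \<Rightarrow> {0,3} | L21 \<Rightarrow> {2,1} | L22 \<Rightarrow> {2,4}))"

definition Gverts :: "nat \<Rightarrow> lab set \<Rightarrow> nat set" where
  "Gverts i I = \<Union> (Gedge i ` I)"

text \<open>(V, e) is a graph H_{i,I} on 8 of the vertices v_0..v_{n-1}: vertex set V, labelled edges
  e ab; edges labelled by I form a copy of G_{i,I}; the other edges are pairwise vertex-disjoint
  and disjoint from the copy; remaining vertices of V are isolated. Its edge set is range e.\<close>
definition is_H :: "nat \<Rightarrow> nat \<Rightarrow> lab set \<Rightarrow> nat set \<Rightarrow> (lab \<Rightarrow> nat set) \<Rightarrow> bool" where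
  "is_H n i I V e \<longleftrightarrow>
     V \<subseteq> {..<n} \<and> card V = 8 \<and>
     (\<forall>ab. e ab \<subseteq> V \<and> card (e ab) = 2) \<and>
     (\<exists>\<phi>. inj_on \<phi> (Gverts i I) \<and> (\<forall>ab\<in>I. e ab = \<phi> ` Gedge i ab)) \<and>
     (\<forall>ab. ab \<notin> I \<longrightarrow> (\<forall>cd. cd \<noteq> ab \<longrightarrow> e ab \<inter> e cd = {}))"

definition PH :: "nat set \<Rightarrow> nat set set \<Rightarrow> nat set set" where
  "PH V E = {C. C \<subseteq> V \<and> (\<exists>ed\<in>E. ed \<subseteq> C)}"

definition clique_cover :: "nat set \<Rightarrow> nat set set \<Rightarrow> nat set set \<Rightarrow> bool" where
  "clique_cover V E \<C> \<longleftrightarrow> \<C> \<subseteq> PH V E \<and> (\<forall>ed\<in>E. \<exists>C\<in>\<C>. ed \<subseteq> C)"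

definition CC_J :: "nat set \<Rightarrow> (lab \<Rightarrow> nat set) \<Rightarrow> lab set \<Rightarrow> nat set set set" where
  "CC_J V e J = {\<C>. clique_cover V (range e) \<C> \<and>
      (\<forall>ab\<in>J. \<not> (\<exists>C\<in>\<C>. card C = 2 \<and> e ab \<subseteq> C)) \<and>
      (\<forall>ab. ab \<notin> J \<longrightarrow> e ab \<in> \<C>)}"

text \<open>Random intersection graph G(n,m,p): omega (a, v) means vertex v (v < n) chose
  attribute a (a < m); all choices independent Bernoulli(p).\<close>
definition rig :: "nat \<Rightarrow> nat \<Rightarrow> real \<Rightarrow> (nat \<times> nat \<Rightarrow> bool) pmf" where
  "rig n m p = Pi_pmf ({..<m} \<times> {..<n}) False (\<lambda>_. bernoulli_pmf p)"

definition builds :: "(nat \<times> nat \<Rightarrow> bool) \<Rightarrow> nat \<Rightarrow> nat set \<Rightarrow> nat set \<Rightarrow> bool" where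
  "builds \<omega> a V C \<longleftrightarrow> (\<forall>v\<in>C. \<omega> (a, v)) \<and> (\<forall>v\<in>V - C. \<not> \<omega> (a, v))"

definition given_by :: "nat \<Rightarrow> nat set \<Rightarrow> nat set set \<Rightarrow> nat set set \<Rightarrow> (nat \<times> nat \<Rightarrow> bool) \<Rightarrow> bool" where
  "given_by m V E \<C> \<omega> \<longleftrightarrow>
     (\<forall>C\<in>\<C>. \<exists>a<m. builds \<omega> a V C) \<and>
     (\<forall>C\<in>PH V E - \<C>. \<not> (\<exists>a<m. builds \<omega> a V C))"

definition pi_cover :: "nat \<Rightarrow> nat \<Rightarrow> real \<Rightarrow> nat set \<Rightarrow> nat set set \<Rightarrow> nat set set \<Rightarrow> real" where
  "pi_cover n m p V E \<C> = measure_pmf.prob (rig n m p) {\<omega>. given_by m V E \<C> \<omega>}"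

definition pi_family :: "nat \<Rightarrow> nat \<Rightarrow> real \<Rightarrow> nat set \<Rightarrow> nat set set \<Rightarrow> nat set set set \<Rightarrow> real" where
  "pi_family n m p V E \<FF> = (\<Sum>\<C>\<in>\<FF>. pi_cover n m p V E \<C>)"

end

theory Submission
  imports Defs
begin

text \<open>
  Whether H is given by a cover in C_J(H) depends only on the traces S_a = {v \<in> V(H). v chose a}
  of the m independent attributes: no trace may be an edge e_j with j \<in> J, and every edge e_k must
  be served by some trace (a strict superset of e_k if k \<in> J, e_k itself otherwise).
  Inclusion-exclusion over the set K of unserved edges gives
  \<pi>(H, C_J(H)) = \<Sum>_K (-1)^|K| x_K^m, where x_K, the probability that a single trace avoids
  everything, is a polynomial in p that sees H only through the number of vertices covered by each
  set L \<subseteq> K \<inter> J of edges. For H = H_{i,I} that number depends on I only through L \<inter> I, so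
  each label outside K \<inter> J makes the alternating sum over I vanish. For J \<noteq> \<I> this is the
  first claim; for J = \<I> only K = \<I> survives, leaving \<Sum>_I (-1)^|I| y_I^m. Expanding y^m to
  second order around y_\<emptyset> = (1 - p^2)^4, where |y_I - y_\<emptyset>| = O(p^3), bounds this by
  m^2 p^6 e^{-4mp^2} plus m e^{-4mp^2} |\<Sum>_I (-1)^|I| y_I|, and the last sum is an alternating sum
  of p^{|V(H_{i,I})|} over I, where H_{i,I} has at least 5 non-isolated vertices (4 for the
  4-cycle, i = 2).
\<close>

section \<open>Alternating sums and inclusion-exclusion\<close>

lemma sum_Pow_alternating_eq_0:
  fixes f :: "'a set \<Rightarrow> 'b::comm_ring_1"
  assumes "finite U" "a \<in> U" and insensitive: "\<And>I. I \<subseteq> U - {a} \<Longrightarrow> f (insert a I) = f I"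
  shows "(\<Sum>I\<in>Pow U. (-1) ^ card I * f I) = 0"
proof -
  define W where "W = U - {a}"
  have U: "U = insert a W" "a \<notin> W" "finite W"
    using assms(1,2) by (auto simp: W_def)
  have "inj_on (insert a) (Pow W)"
    using U(2) by (intro inj_onI) (auto simp: insert_ident)
  then have "(\<Sum>I\<in>Pow U. (-1) ^ card I * f I)
      = (\<Sum>I\<in>Pow W. (-1) ^ card I * f I) + (\<Sum>I\<in>Pow W. (-1) ^ card (insert a I) * f (insert a I))"
    unfolding U(1) Pow_insert using U(2,3)
    by (subst sum.union_disjoint) (auto simp: sum.reindex)
  also have "(\<Sum>I\<in>Pow W. (-1) ^ card (insert a I) * f (insert a I)) = - (\<Sum>I\<in>Pow W. (-1) ^ card I * f I)"
    unfolding sum_negf[symmetric]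
  proof (intro sum.cong refl)
    fix I assume "I \<in> Pow W"
    then have "finite I" "a \<notin> I" "I \<subseteq> U - {a}"
      using U(2,3) finite_subset by (auto simp: W_def)
    then show "(-1) ^ card (insert a I) * f (insert a I) = - ((-1) ^ card I * f I)"
      using insensitive by simp
  qed
  finally show ?thesis by simp
qed

lemma alternating_double_sum_eq_top:
  fixes F :: "'a::finite set \<Rightarrow> 'a set \<Rightarrow> 'b::comm_ring_1"
  assumes insensitive: "\<And>K a I. a \<notin> K \<Longrightarrow> F K (insert a I) = F K I"
  shows "(\<Sum>I\<in>Pow UNIV. (-1) ^ card I * (\<Sum>K\<in>Pow UNIV. (-1) ^ card K * F K I))
       = (-1) ^ CARD('a) * (\<Sum>I\<in>Pow UNIV. (-1) ^ card I * F UNIV I)"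
proof -
  define g where "g K = (-1) ^ card K * (\<Sum>I\<in>Pow UNIV. (-1) ^ card I * F K I)" for K
  have "(\<Sum>I\<in>Pow UNIV. (-1) ^ card I * (\<Sum>K\<in>Pow UNIV. (-1) ^ card K * F K I)) = (\<Sum>K\<in>Pow UNIV. g K)"
    unfolding g_def sum_distrib_left by (subst sum.swap) (simp add: mult.left_commute)
  also have "\<dots> = g UNIV + (\<Sum>K\<in>Pow UNIV - {UNIV}. g K)"
    by (rule sum.remove) simp_all
  also have "(\<Sum>K\<in>Pow UNIV - {UNIV}. g K) = 0"
  proof (rule sum.neutral, rule ballI)
    fix K :: "'a set" assume "K \<in> Pow UNIV - {UNIV}"
    then obtain a where "a \<notin> K" by auto
    then show "g K = 0"
      unfolding g_def using insensitive by (subst sum_Pow_alternating_eq_0[of UNIV a]) simp_all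
  qed
  finally show ?thesis by (simp add: g_def)
qed

lemma inclusion_exclusion_complement:
  fixes f :: "'a set \<Rightarrow> 'b::ring_1"
  assumes additive: "\<And>S T. disjnt S T \<Longrightarrow> f (S \<union> T) = f S + f T" and "finite K"
  shows "f (A - \<Union>(G ` K)) = (\<Sum>L\<in>Pow K. (-1) ^ card L * f (A \<inter> \<Inter>(G ` L)))"
proof -
  have restrict_additive: "f (A \<inter> (S \<union> T)) = f (A \<inter> S) + f (A \<inter> T)" if "disjnt S T" for S T
    using additive[of "A \<inter> S" "A \<inter> T"] that by (simp add: Int_Un_distrib disjnt_def inf_assoc inf_left_commute)
  have "f A = f ((A - \<Union>(G ` K)) \<union> (A \<inter> \<Union>(G ` K)))"
    by (simp add: Un_Diff_Int)
  also have "\<dots> = f (A - \<Union>(G ` K)) + f (A \<inter> \<Union>(G ` K))"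
    by (rule additive) (auto simp: disjnt_def)
  finally have "f A = f (A - \<Union>(G ` K)) + f (A \<inter> \<Union>(G ` K))" .
  moreover have "f (A \<inter> \<Union>(G ` K)) = (\<Sum>L | L \<subseteq> K \<and> L \<noteq> {}. (-1) ^ (card L + 1) * f (A \<inter> \<Inter>(G ` L)))"
    using Incl_Excl_UN[of "\<lambda>S. f (A \<inter> S)" K G] restrict_additive \<open>finite K\<close> by blast
  moreover have "(\<Sum>L\<in>Pow K. (-1) ^ card L * f (A \<inter> \<Inter>(G ` L)))
      = f A + (\<Sum>L | L \<subseteq> K \<and> L \<noteq> {}. (-1) ^ card L * f (A \<inter> \<Inter>(G ` L)))"
  proof -
    have "Pow K = insert {} {L. L \<subseteq> K \<and> L \<noteq> {}}" by auto
    then show ?thesis using \<open>finite K\<close> by (simp add: sum.insert)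
  qed
  ultimately show ?thesis by (simp add: sum_negf)
qed

lemma prob_all_eq_alternating_sum:
  fixes M :: "'a pmf"
  assumes "finite K"
  shows "measure_pmf.prob M {x \<in> A. \<forall>k\<in>K. P k x}
       = (\<Sum>L\<in>Pow K. (-1) ^ card L * measure_pmf.prob M {x \<in> A. \<forall>k\<in>L. \<not> P k x})"
proof -
  have "measure_pmf.prob M (A - (\<Union>k\<in>K. {x. \<not> P k x}))
      = (\<Sum>L\<in>Pow K. (-1) ^ card L * measure_pmf.prob M (A \<inter> (\<Inter>k\<in>L. {x. \<not> P k x})))"
    by (rule inclusion_exclusion_complement[OF _ assms])
       (simp add: measure_pmf.finite_measure_Union disjnt_def)
  moreover have "A - (\<Union>k\<in>K. {x. \<not> P k x}) = {x \<in> A. \<forall>k\<in>K. P k x}" by auto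
  moreover have "A \<inter> (\<Inter>k\<in>L. {x. \<not> P k x}) = {x \<in> A. \<forall>k\<in>L. \<not> P k x}" for L by auto
  ultimately show ?thesis by simp
qed

section \<open>Traces of attributes\<close>

definition attr_trace :: "nat set \<Rightarrow> nat \<Rightarrow> (nat \<times> nat \<Rightarrow> bool) \<Rightarrow> nat set" where
  "attr_trace V a \<omega> = {v \<in> V. \<omega> (a, v)}"

definition trace_weight :: "real \<Rightarrow> nat set \<Rightarrow> nat set \<Rightarrow> real" where
  "trace_weight p V S = p ^ card S * (1 - p) ^ (card V - card S)"

lemma attr_trace_subset: "attr_trace V a \<omega> \<subseteq> V"
  by (auto simp: attr_trace_def)

lemma builds_iff_attr_trace_eq: "C \<subseteq> V \<Longrightarrow> builds \<omega> a V C \<longleftrightarrow> attr_trace V a \<omega> = C"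
  unfolding builds_def attr_trace_def by auto

lemma prob_bernoulli_singleton:
  "0 \<le> p \<Longrightarrow> p \<le> 1 \<Longrightarrow> measure_pmf.prob (bernoulli_pmf p) {b} = (if b then p else 1 - p)"
  by (cases b) (simp_all add: measure_pmf_single)

lemma prod_if_eq_trace_weight:
  assumes "finite V" "S \<subseteq> V"
  shows "(\<Prod>v\<in>V. if v \<in> S then p else 1 - p) = trace_weight p V S"
proof -
  have "(\<Prod>v\<in>V. if v \<in> S then p else 1 - p) = (\<Prod>v\<in>V \<inter> S. p) * (\<Prod>v\<in>V - S. 1 - p)"
    using prod.If_cases[OF \<open>finite V\<close>, of "\<lambda>v. v \<in> S" "\<lambda>_. p" "\<lambda>_. 1 - p"]
    by (simp add: Diff_eq)
  then show ?thesis
    using assms by (simp add: trace_weight_def Int_absorb1 card_Diff_subset finite_subset)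
qed

lemma prob_rig_Pi:
  "measure_pmf.prob (rig n m p) (Pi ({..<m} \<times> {..<n}) B)
     = (\<Prod>a<m. \<Prod>v<n. measure_pmf.prob (bernoulli_pmf p) (B (a, v)))"
  unfolding rig_def by (simp add: measure_Pi_pmf_Pi prod.cartesian_product case_prod_unfold)

lemma prob_rig_all_chosen:
  assumes F: "F \<subseteq> {..<m} \<times> {..<n}" and p: "0 \<le> p" "p \<le> 1"
  shows "measure_pmf.prob (rig n m p) {\<omega>. \<forall>x\<in>F. \<omega> x} = p ^ card F"
proof -
  define A where "A = {..<m} \<times> {..<n}"
  have "{\<omega>. \<forall>x\<in>F. \<omega> x} = Pi A (\<lambda>x. if x \<in> F then {True} else UNIV)"
    using F by (auto simp: A_def Pi_def)
  then have "measure_pmf.prob (rig n m p) {\<omega>. \<forall>x\<in>F. \<omega> x}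
      = (\<Prod>x\<in>A. measure_pmf.prob (bernoulli_pmf p) (if x \<in> F then {True} else UNIV))"
    unfolding rig_def A_def by (simp add: measure_Pi_pmf_Pi)
  also have "\<dots> = (\<Prod>x\<in>A. if x \<in> F then p else 1)"
    using p by (intro prod.cong refl) (simp add: prob_bernoulli_singleton)
  also have "\<dots> = (\<Prod>x\<in>{x \<in> A. x \<in> F}. p)"
    by (rule prod.inter_filter[symmetric]) (simp add: A_def)
  also have "{x \<in> A. x \<in> F} = F"
    using F by (auto simp: A_def)
  finally show ?thesis by simp
qed

lemma prob_attr_trace_profile:
  assumes V: "V \<subseteq> {..<n}" and s: "\<And>a. a < m \<Longrightarrow> s a \<subseteq> V" and p: "0 \<le> p" "p \<le> 1"
  shows "measure_pmf.prob (rig n m p) {\<omega>. \<forall>a<m. attr_trace V a \<omega> = s a}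
       = (\<Prod>a<m. trace_weight p V (s a))"
proof -
  define B where "B x = (if snd x \<in> V then {snd x \<in> s (fst x)} else UNIV)" for x :: "nat \<times> nat"
  have trace_eq: "attr_trace V a \<omega> = s a \<longleftrightarrow> (\<forall>v\<in>V. \<omega> (a, v) \<longleftrightarrow> v \<in> s a)" if "a < m" for a \<omega>
    using s[OF that] by (auto simp: attr_trace_def)
  have "{\<omega>. \<forall>a<m. attr_trace V a \<omega> = s a} = Pi ({..<m} \<times> {..<n}) B"
    using V by (auto simp: trace_eq B_def Pi_def)
  moreover have "(\<Prod>v<n. measure_pmf.prob (bernoulli_pmf p) (B (a, v))) = trace_weight p V (s a)"
    if "a < m" for a
  proof -
    have "(\<Prod>v<n. measure_pmf.prob (bernoulli_pmf p) (B (a, v)))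
        = (\<Prod>v<n. if v \<in> V then (if v \<in> s a then p else 1 - p) else 1)"
      using p by (intro prod.cong) (auto simp: B_def prob_bernoulli_singleton)
    also have "\<dots> = (\<Prod>v\<in>{v \<in> {..<n}. v \<in> V}. if v \<in> s a then p else 1 - p)"
      by (rule prod.inter_filter[symmetric]) simp
    also have "{v \<in> {..<n}. v \<in> V} = V"
      using V by auto
    also have "(\<Prod>v\<in>V. if v \<in> s a then p else 1 - p) = trace_weight p V (s a)"
      using V s[OF that] by (intro prod_if_eq_trace_weight) (auto intro: finite_subset)
    finally show ?thesis .
  qed
  ultimately show ?thesis
    by (simp add: prob_rig_Pi)
qed

lemma prob_attr_traces_in:
  assumes V: "V \<subseteq> {..<n}" and Y: "Y \<subseteq> Pow V" and p: "0 \<le> p" "p \<le> 1"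
  shows "measure_pmf.prob (rig n m p) {\<omega>. \<forall>a<m. attr_trace V a \<omega> \<in> Y}
       = (\<Sum>S\<in>Y. trace_weight p V S) ^ m"
proof -
  define profile where "profile s = {\<omega>. \<forall>a<m. attr_trace V a \<omega> = s a}" for s
  define Profiles where "Profiles = PiE {..<m} (\<lambda>_. Y)"
  have "finite Y"
    using Y V finite_subset by (metis finite_Pow_iff finite_lessThan)
  have "{\<omega>. \<forall>a<m. attr_trace V a \<omega> \<in> Y} = (\<Union>s\<in>Profiles. profile s)"
  proof (intro equalityI subsetI)
    fix \<omega> assume "\<omega> \<in> {\<omega>. \<forall>a<m. attr_trace V a \<omega> \<in> Y}"
    then have "restrict (\<lambda>a. attr_trace V a \<omega>) {..<m} \<in> Profiles"
      "\<omega> \<in> profile (restrict (\<lambda>a. attr_trace V a \<omega>) {..<m})"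
      by (auto simp: Profiles_def profile_def)
    then show "\<omega> \<in> (\<Union>s\<in>Profiles. profile s)"
      by blast
  qed (auto simp: Profiles_def profile_def)
  moreover have "disjoint_family_on profile Profiles"
  proof (unfold disjoint_family_on_def, intro ballI impI)
    fix s s' assume "s \<in> Profiles" "s' \<in> Profiles" "s \<noteq> s'"
    then obtain a where "a < m" "s a \<noteq> s' a"
      unfolding Profiles_def by (metis PiE_ext lessThan_iff)
    then show "profile s \<inter> profile s' = {}"
      by (auto simp: profile_def)
  qed
  ultimately have "measure_pmf.prob (rig n m p) {\<omega>. \<forall>a<m. attr_trace V a \<omega> \<in> Y}
      = (\<Sum>s\<in>Profiles. measure_pmf.prob (rig n m p) (profile s))"
    using \<open>finite Y\<close> by (auto simp: Profiles_def intro!: measure_pmf.finite_measure_finite_Union finite_PiE)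
  also have "\<dots> = (\<Sum>s\<in>Profiles. \<Prod>a<m. trace_weight p V (s a))"
    using Y V p unfolding profile_def Profiles_def
    by (intro sum.cong refl prob_attr_trace_profile) auto
  also have "\<dots> = (\<Prod>a<m. \<Sum>S\<in>Y. trace_weight p V S)"
    unfolding Profiles_def by (rule prod_sum_PiE[symmetric]) (use \<open>finite Y\<close> in auto)
  also have "\<dots> = (\<Sum>S\<in>Y. trace_weight p V S) ^ m"
    by simp
  finally show ?thesis .
qed

lemma sum_trace_weight_eq_prob:
  assumes "V \<subseteq> {..<n}" "Y \<subseteq> Pow V" "0 \<le> p" "p \<le> 1"
  shows "(\<Sum>S\<in>Y. trace_weight p V S) = measure_pmf.prob (rig n 1 p) {\<omega>. attr_trace V 0 \<omega> \<in> Y}"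
  using prob_attr_traces_in[OF assms, of 1] by simp

section \<open>Covers given by the attributes\<close>

definition built_cliques :: "nat \<Rightarrow> nat set \<Rightarrow> nat set set \<Rightarrow> (nat \<times> nat \<Rightarrow> bool) \<Rightarrow> nat set set" where
  "built_cliques m V E \<omega> = {C \<in> PH V E. \<exists>a<m. builds \<omega> a V C}"

lemma given_by_iff_built_cliques: "\<C> \<subseteq> PH V E \<Longrightarrow> given_by m V E \<C> \<omega> \<longleftrightarrow> \<C> = built_cliques m V E \<omega>"
  unfolding given_by_def built_cliques_def by blast

lemma finite_PH: "finite V \<Longrightarrow> finite (PH V E)"
  unfolding PH_def by (rule finite_subset[of _ "Pow V"]) auto

lemma pi_family_eq_prob_built_cliques:
  assumes "finite V" "\<FF> \<subseteq> Pow (PH V E)"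
  shows "pi_family n m p V E \<FF> = measure_pmf.prob (rig n m p) {\<omega>. built_cliques m V E \<omega> \<in> \<FF>}"
proof -
  have "finite \<FF>"
    using assms finite_PH by (metis finite_Pow_iff finite_subset)
  have given_by_iff: "given_by m V E \<C> \<omega> \<longleftrightarrow> \<C> = built_cliques m V E \<omega>" if "\<C> \<in> \<FF>" for \<C> \<omega>
    using that assms(2) by (intro given_by_iff_built_cliques) auto
  then have event_eq: "{\<omega>. built_cliques m V E \<omega> \<in> \<FF>} = (\<Union>\<C>\<in>\<FF>. {\<omega>. given_by m V E \<C> \<omega>})"
    by auto
  have "disjoint_family_on (\<lambda>\<C>. {\<omega>. given_by m V E \<C> \<omega>}) \<FF>"
    using given_by_iff by (auto simp: disjoint_family_on_def)
  with \<open>finite \<FF>\<close> show ?thesis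
    unfolding pi_family_def pi_cover_def event_eq
    by (intro measure_finite_Union[symmetric]) (auto simp: measure_pmf.emeasure_eq_measure)
qed

lemma mem_built_cliques_range:
  "C \<in> built_cliques m V (range e) \<omega> \<longleftrightarrow> C \<subseteq> V \<and> (\<exists>k. e k \<subseteq> C) \<and> (\<exists>a<m. attr_trace V a \<omega> = C)"
  unfolding built_cliques_def PH_def using builds_iff_attr_trace_eq by blast

definition serves :: "(lab \<Rightarrow> nat set) \<Rightarrow> lab set \<Rightarrow> lab \<Rightarrow> nat set \<Rightarrow> bool" where
  "serves e J k S \<longleftrightarrow> (if k \<in> J then e k \<subset> S else S = e k)"

lemma serves_if_mem [simp]: "k \<in> J \<Longrightarrow> serves e J k S \<longleftrightarrow> e k \<subset> S"
  and serves_if_not_mem [simp]: "k \<notin> J \<Longrightarrow> serves e J k S \<longleftrightarrow> S = e k"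
  by (simp_all add: serves_def)

lemma serves_imp_subset: "serves e J k S \<Longrightarrow> e k \<subseteq> S"
  by (cases "k \<in> J") auto

lemma attr_trace_in_built_cliques:
  "a < m \<Longrightarrow> e k \<subseteq> attr_trace V a \<omega> \<Longrightarrow> attr_trace V a \<omega> \<in> built_cliques m V (range e) \<omega>"
  using attr_trace_subset by (auto simp: mem_built_cliques_range)

lemma built_cliques_in_CC_J_imp_serves:
  assumes "built_cliques m V (range e) \<omega> \<in> CC_J V e J" and pairs: "\<And>k. card (e k) = 2"
  shows "\<forall>a<m. attr_trace V a \<omega> \<notin> e ` J" and "\<exists>a<m. serves e J k (attr_trace V a \<omega>)"
proof -
  let ?T = "built_cliques m V (range e) \<omega>"
  from assms(1) have cover: "clique_cover V (range e) ?T"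
    and no_pair: "\<forall>j\<in>J. \<not> (\<exists>C\<in>?T. card C = 2 \<and> e j \<subseteq> C)"
    and edges_built: "\<forall>k. k \<notin> J \<longrightarrow> e k \<in> ?T"
    by (simp_all add: CC_J_def)
  show "\<forall>a<m. attr_trace V a \<omega> \<notin> e ` J"
  proof (intro allI impI notI)
    fix a assume "a < m" "attr_trace V a \<omega> \<in> e ` J"
    then obtain j where "j \<in> J" "attr_trace V a \<omega> = e j" by blast
    with attr_trace_in_built_cliques[of a m e j V \<omega>] \<open>a < m\<close> have "e j \<in> ?T" by simp
    with no_pair \<open>j \<in> J\<close> pairs[of j] show False by blast
  qed
  show "\<exists>a<m. serves e J k (attr_trace V a \<omega>)"
  proof (cases "k \<in> J")
    case True
    obtain C where "C \<in> ?T" "e k \<subseteq> C"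
      using cover unfolding clique_cover_def by blast
    moreover have "C \<noteq> e k"
      using no_pair True pairs[of k] calculation by blast
    moreover obtain a where "a < m" "attr_trace V a \<omega> = C"
      using calculation(1) by (auto simp: mem_built_cliques_range)
    ultimately show ?thesis using True by auto
  next
    case False
    then obtain a where "a < m" "attr_trace V a \<omega> = e k"
      using edges_built by (auto simp: mem_built_cliques_range)
    then show ?thesis using False by auto
  qed
qed

lemma serves_imp_built_cliques_in_CC_J:
  assumes "finite V" "\<And>k. card (e k) = 2"
    and avoid: "\<forall>a<m. attr_trace V a \<omega> \<notin> e ` J" and served: "\<forall>k. \<exists>a<m. serves e J k (attr_trace V a \<omega>)"
  shows "built_cliques m V (range e) \<omega> \<in> CC_J V e J"
proof -
  let ?T = "built_cliques m V (range e) \<omega>"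
  have "\<exists>C\<in>?T. e k \<subseteq> C" for k
  proof -
    obtain a where "a < m" "serves e J k (attr_trace V a \<omega>)"
      using served by blast
    then show ?thesis
      using serves_imp_subset attr_trace_in_built_cliques[of a m e k V \<omega>] by blast
  qed
  then have "clique_cover V (range e) ?T"
    by (auto simp: clique_cover_def built_cliques_def)
  moreover have "\<not> (\<exists>C\<in>?T. card C = 2 \<and> e j \<subseteq> C)" if "j \<in> J" for j
  proof
    assume "\<exists>C\<in>?T. card C = 2 \<and> e j \<subseteq> C"
    then obtain C a where "a < m" "attr_trace V a \<omega> = C" "C \<subseteq> V" "card C = 2" "e j \<subseteq> C"
      by (auto simp: mem_built_cliques_range)
    moreover have "C = e j"
      using calculation assms(2)[of j] \<open>finite V\<close> by (metis card_subset_eq finite_subset)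
    ultimately show False
      using avoid that by blast
  qed
  moreover have "e k \<in> ?T" if "k \<notin> J" for k
  proof -
    obtain a where "a < m" "serves e J k (attr_trace V a \<omega>)"
      using served by blast
    then show ?thesis
      using attr_trace_in_built_cliques[of a m e k V \<omega>] that by simp
  qed
  ultimately show ?thesis
    by (simp add: CC_J_def)
qed

lemma built_cliques_in_CC_J_iff:
  assumes "finite V" "\<And>k. card (e k) = 2"
  shows "built_cliques m V (range e) \<omega> \<in> CC_J V e J \<longleftrightarrow>
    (\<forall>a<m. attr_trace V a \<omega> \<notin> e ` J) \<and> (\<forall>k. \<exists>a<m. serves e J k (attr_trace V a \<omega>))"
proof
  assume "built_cliques m V (range e) \<omega> \<in> CC_J V e J"
  from built_cliques_in_CC_J_imp_serves[OF this assms(2)]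
  show "(\<forall>a<m. attr_trace V a \<omega> \<notin> e ` J) \<and> (\<forall>k. \<exists>a<m. serves e J k (attr_trace V a \<omega>))"
    by blast
next
  assume "(\<forall>a<m. attr_trace V a \<omega> \<notin> e ` J) \<and> (\<forall>k. \<exists>a<m. serves e J k (attr_trace V a \<omega>))"
  then show "built_cliques m V (range e) \<omega> \<in> CC_J V e J"
    by (elim conjE) (rule serves_imp_built_cliques_in_CC_J[OF assms])
qed

definition avoiding_traces :: "nat set \<Rightarrow> (lab \<Rightarrow> nat set) \<Rightarrow> lab set \<Rightarrow> lab set \<Rightarrow> nat set set" where
  "avoiding_traces V e J K = {S. S \<subseteq> V \<and> S \<notin> e ` J \<and> (\<forall>k\<in>K. \<not> serves e J k S)}"

lemma pi_family_CC_J_eq: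
  fixes p :: real
  assumes V: "V \<subseteq> {..<n}" and edges: "\<And>k. e k \<subseteq> V" "\<And>k. card (e k) = 2" and p: "0 \<le> p" "p \<le> 1"
  shows "pi_family n m p V (range e) (CC_J V e J)
       = (\<Sum>K\<in>Pow UNIV. (-1) ^ card K * (\<Sum>S\<in>avoiding_traces V e J K. trace_weight p V S) ^ m)"
proof -
  have "finite V"
    using V finite_subset by blast
  define Avoid where "Avoid = {\<omega>. \<forall>a<m. attr_trace V a \<omega> \<notin> e ` J}"
  have family: "CC_J V e J \<subseteq> Pow (PH V (range e))"
    by (auto simp: CC_J_def clique_cover_def)
  have event_eq: "{\<omega>. built_cliques m V (range e) \<omega> \<in> CC_J V e J}
      = {\<omega> \<in> Avoid. \<forall>k\<in>UNIV. \<exists>a<m. serves e J k (attr_trace V a \<omega>)}"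
    using built_cliques_in_CC_J_iff[OF \<open>finite V\<close> edges(2)] by (auto simp: Avoid_def)
  have "pi_family n m p V (range e) (CC_J V e J)
      = measure_pmf.prob (rig n m p) {\<omega> \<in> Avoid. \<forall>k\<in>UNIV. \<exists>a<m. serves e J k (attr_trace V a \<omega>)}"
    unfolding event_eq[symmetric] by (rule pi_family_eq_prob_built_cliques[OF \<open>finite V\<close> family])
  also have "\<dots> = (\<Sum>K\<in>Pow UNIV. (-1) ^ card K *
      measure_pmf.prob (rig n m p) {\<omega> \<in> Avoid. \<forall>k\<in>K. \<not> (\<exists>a<m. serves e J k (attr_trace V a \<omega>))})"
    by (rule prob_all_eq_alternating_sum) simp
  also have "\<dots> = (\<Sum>K\<in>Pow UNIV. (-1) ^ card K * (\<Sum>S\<in>avoiding_traces V e J K. trace_weight p V S) ^ m)"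
  proof (intro sum.cong refl)
    fix K
    have "{\<omega> \<in> Avoid. \<forall>k\<in>K. \<not> (\<exists>a<m. serves e J k (attr_trace V a \<omega>))}
        = {\<omega>. \<forall>a<m. attr_trace V a \<omega> \<in> avoiding_traces V e J K}"
      by (auto simp: Avoid_def avoiding_traces_def attr_trace_subset)
    moreover have "avoiding_traces V e J K \<subseteq> Pow V"
      by (auto simp: avoiding_traces_def)
    ultimately show "(-1) ^ card K * measure_pmf.prob (rig n m p)
          {\<omega> \<in> Avoid. \<forall>k\<in>K. \<not> (\<exists>a<m. serves e J k (attr_trace V a \<omega>))}
        = (-1) ^ card K * (\<Sum>S\<in>avoiding_traces V e J K. trace_weight p V S) ^ m"
      using prob_attr_traces_in[OF V _ p] by simp
  qed
  finally show ?thesis .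
qed

lemma sum_trace_weight_containing_no_edge:
  fixes e :: "'k \<Rightarrow> nat set" and p :: real
  assumes V: "V \<subseteq> {..<n}" and edges: "\<And>k. k \<in> K \<Longrightarrow> e k \<subseteq> V" and "finite K" and p: "0 \<le> p" "p \<le> 1"
  shows "(\<Sum>S | S \<subseteq> V \<and> (\<forall>k\<in>K. \<not> e k \<subseteq> S). trace_weight p V S)
       = (\<Sum>L\<in>Pow K. (-1) ^ card L * p ^ card (\<Union>(e ` L)))"
proof -
  have "(\<Sum>S | S \<subseteq> V \<and> (\<forall>k\<in>K. \<not> e k \<subseteq> S). trace_weight p V S)
      = measure_pmf.prob (rig n 1 p) {\<omega> \<in> UNIV. \<forall>k\<in>K. \<not> e k \<subseteq> attr_trace V 0 \<omega>}"
    using attr_trace_subset by (subst sum_trace_weight_eq_prob[OF V _ p]) auto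
  also have "\<dots> = (\<Sum>L\<in>Pow K. (-1) ^ card L *
      measure_pmf.prob (rig n 1 p) {\<omega> \<in> UNIV. \<forall>k\<in>L. \<not> \<not> e k \<subseteq> attr_trace V 0 \<omega>})"
    using \<open>finite K\<close> by (rule prob_all_eq_alternating_sum)
  also have "\<dots> = (\<Sum>L\<in>Pow K. (-1) ^ card L *
      measure_pmf.prob (rig n 1 p) {\<omega>. \<forall>x\<in>{0} \<times> \<Union>(e ` L). \<omega> x})"
  proof (intro sum.cong refl arg_cong2[where f="(*)"] arg_cong[where f="measure_pmf.prob _"])
    fix L assume "L \<in> Pow K"
    then show "{\<omega> \<in> UNIV. \<forall>k\<in>L. \<not> \<not> e k \<subseteq> attr_trace V 0 \<omega>} = {\<omega>. \<forall>x\<in>{0} \<times> \<Union>(e ` L). \<omega> x}"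
      using edges by (auto simp: attr_trace_def)
  qed
  also have "\<dots> = (\<Sum>L\<in>Pow K. (-1) ^ card L * p ^ card (\<Union>(e ` L)))"
  proof (intro sum.cong refl)
    fix L assume "L \<in> Pow K"
    then have "\<Union>(e ` L) \<subseteq> V"
      using edges by auto
    then have "{0::nat} \<times> \<Union>(e ` L) \<subseteq> {..<1} \<times> {..<n}"
      using V by auto
    then have "measure_pmf.prob (rig n 1 p) {\<omega>. \<forall>x\<in>{0} \<times> \<Union>(e ` L). \<omega> x} = p ^ card ({0::nat} \<times> \<Union>(e ` L))"
      by (rule prob_rig_all_chosen[OF _ p])
    then show "(-1) ^ card L * measure_pmf.prob (rig n 1 p) {\<omega>. \<forall>x\<in>{0} \<times> \<Union>(e ` L). \<omega> x}
        = (-1) ^ card L * p ^ card (\<Union>(e ` L))"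
      by (simp only: card_cartesian_product_singleton)
  qed
  finally show ?thesis .
qed

lemma sum_trace_weight_avoiding_traces:
  fixes p :: real
  assumes V: "V \<subseteq> {..<n}" and edges: "\<And>k. e k \<subseteq> V" "\<And>k. card (e k) = 2" "inj e"
    and p: "0 \<le> p" "p \<le> 1"
  shows "(\<Sum>S\<in>avoiding_traces V e J K. trace_weight p V S)
       = (\<Sum>L\<in>Pow (K \<inter> J). (-1) ^ card L * p ^ card (\<Union>(e ` L)))
         - card (sym_diff J K) * (p ^ 2 * (1 - p) ^ (card V - 2))"
proof -
  define Z where "Z = {S. S \<subseteq> V \<and> (\<forall>k\<in>K \<inter> J. \<not> e k \<subseteq> S)}"
  define D where "D = sym_diff J K"
  have "finite Z"
    using V by (auto simp: Z_def intro: finite_subset[of _ "Pow V"] finite_subset)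
  have avoid_eq: "avoiding_traces V e J K = Z - e ` D"
    by (auto simp: avoiding_traces_def Z_def D_def serves_def)
  have "e ` D \<subseteq> Z"
  proof -
    have "\<not> e k \<subseteq> e d" if "d \<in> D" "k \<in> K \<inter> J" for d k
    proof
      assume "e k \<subseteq> e d"
      then have "e k = e d"
        using edges(1,2) V by (metis card_subset_eq finite_subset finite_lessThan)
      then show False
        using that \<open>inj e\<close> by (auto simp: D_def inj_eq)
    qed
    then show ?thesis
      using edges(1) by (auto simp: Z_def)
  qed
  moreover have "(\<Sum>S\<in>e ` D. trace_weight p V S) = card D * (p ^ 2 * (1 - p) ^ (card V - 2))"
    using \<open>inj e\<close> edges(2) by (simp add: sum.reindex inj_on_subset trace_weight_def)
  moreover have "(\<Sum>S\<in>Z. trace_weight p V S) = (\<Sum>L\<in>Pow (K \<inter> J). (-1) ^ card L * p ^ card (\<Union>(e ` L)))"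
    unfolding Z_def using V edges(1) p by (intro sum_trace_weight_containing_no_edge) auto
  ultimately show ?thesis
    unfolding avoid_eq D_def using \<open>finite Z\<close> by (simp add: sum_diff)
qed

section \<open>The graphs H_{i,I}\<close>

lemma CARD_lab: "CARD(lab) = 4"
  by (simp add: UNIV_lab)

lemma finite_Gedge: "finite (Gedge i k)"
  and card_Gedge: "card (Gedge i k) = 2"
  by (cases k; simp add: Gedge_def)+

lemma finite_Gverts: "finite (Gverts i I)"
  by (simp add: Gverts_def finite_Gedge)

lemma inj_Gedge: "inj (Gedge i)"
proof (rule injI)
  fix k l assume "Gedge i k = Gedge i l"
  then show "k = l"
    by (cases k; cases l; cases "i = 1"; cases "i = 2") (simp_all add: Gedge_def doubleton_eq_iff)
qed

text \<open>The number of vertices of H_{i,I} covered by the edges labelled by L.\<close>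

definition span_size :: "nat \<Rightarrow> lab set \<Rightarrow> lab set \<Rightarrow> nat" where
  "span_size i I L = card (Gverts i (L \<inter> I)) + 2 * card (L - I)"

lemma span_size_insert:
  assumes "a \<notin> L"
  shows "span_size i (insert a I) L = span_size i I L"
proof -
  have "L \<inter> insert a I = L \<inter> I" "L - insert a I = L - I"
    using assms by auto
  then show ?thesis
    by (simp add: span_size_def)
qed

lemma span_size_empty: "span_size i {} L = 2 * card L"
  by (simp add: span_size_def Gverts_def)

lemma span_size_card_le_1:
  assumes "card L \<le> 1"
  shows "span_size i I L = 2 * card L"
proof -
  consider "L = {}" | k where "L = {k}"
    using assms by (metis card_0_eq card_1_singletonE finite le_Suc_eq One_nat_def le_zero_eq)
  then show ?thesis
    by cases (auto simp: span_size_def Gverts_def card_Gedge Int_insert_left insert_Diff_if)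
qed

lemma span_size_UNIV_ge: "(if i = 2 then 4 else 5) \<le> span_size i I UNIV"
proof -
  have "\<forall>I\<in>Pow {L11, L12, L21, L22}. (if i = 2 then 4 else 5) \<le> span_size i I UNIV"
    by (cases "i = 1"; cases "i = 2")
       (simp_all add: Pow_insert span_size_def Gverts_def Gedge_def UNIV_lab insert_Diff_if card_insert_if)
  moreover have "I \<in> Pow {L11, L12, L21, L22}"
    unfolding UNIV_lab[symmetric] by blast
  ultimately show ?thesis
    by blast
qed

lemma is_H_facts:
  assumes "is_H n i I V e"
  shows "V \<subseteq> {..<n}" "card V = 8" "\<And>k. e k \<subseteq> V" "\<And>k. card (e k) = 2"
  using assms unfolding is_H_def by (elim conjE; blast)+

lemma is_H_template:
  assumes "is_H n i I V e"
  obtains \<phi> where "inj_on \<phi> (Gverts i I)" "\<And>k. k \<in> I \<Longrightarrow> e k = \<phi> ` Gedge i k"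
    and "\<And>k l. k \<notin> I \<Longrightarrow> l \<noteq> k \<Longrightarrow> e k \<inter> e l = {}"
proof -
  from assms obtain \<phi> where "inj_on \<phi> (Gverts i I)" "\<forall>k\<in>I. e k = \<phi> ` Gedge i k"
    and "\<forall>k. k \<notin> I \<longrightarrow> (\<forall>l. l \<noteq> k \<longrightarrow> e k \<inter> e l = {})"
    unfolding is_H_def by (elim conjE exE)
  with that show ?thesis
    by blast
qed

lemma is_H_inj:
  assumes H: "is_H n i I V e"
  shows "inj e"
proof (rule injI, rule ccontr)
  fix k l assume "e k = e l" "k \<noteq> l"
  obtain \<phi> where \<phi>: "inj_on \<phi> (Gverts i I)" "\<And>k. k \<in> I \<Longrightarrow> e k = \<phi> ` Gedge i k"
    and disjoint: "\<And>k l. k \<notin> I \<Longrightarrow> l \<noteq> k \<Longrightarrow> e k \<inter> e l = {}"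
    using is_H_template[OF H] by blast
  have "e k \<noteq> {}"
    using is_H_facts(4)[OF H, of k] by auto
  then have "k \<in> I" "l \<in> I"
    using disjoint[of k l] disjoint[of l k] \<open>e k = e l\<close> \<open>k \<noteq> l\<close> by auto
  moreover have "Gedge i k \<subseteq> Gverts i I" "Gedge i l \<subseteq> Gverts i I"
    using calculation by (auto simp: Gverts_def)
  ultimately have "Gedge i k = Gedge i l"
    using \<phi> \<open>e k = e l\<close> by (simp add: inj_on_image_eq_iff)
  then show False
    using inj_Gedge \<open>k \<noteq> l\<close> by (metis injD)
qed

lemma card_Union_is_H_edges:
  assumes H: "is_H n i I V e"
  shows "card (\<Union>(e ` L)) = span_size i I L"
proof -
  obtain \<phi> where \<phi>: "inj_on \<phi> (Gverts i I)" "\<And>k. k \<in> I \<Longrightarrow> e k = \<phi> ` Gedge i k"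
    and disjoint: "\<And>k l. k \<notin> I \<Longrightarrow> l \<noteq> k \<Longrightarrow> e k \<inter> e l = {}"
    using is_H_template[OF H] by blast
  have finite_e: "finite (e k)" for k
    using is_H_facts(4)[OF H, of k] by (intro card_ge_0_finite) simp
  have template_part: "\<Union>(e ` (L \<inter> I)) = \<phi> ` Gverts i (L \<inter> I)"
    using \<phi>(2) by (auto simp: Gverts_def)
  have "card (\<phi> ` Gverts i (L \<inter> I)) = card (Gverts i (L \<inter> I))"
    using \<phi>(1) by (intro card_image inj_on_subset[OF \<phi>(1)]) (auto simp: Gverts_def)
  moreover have "card (\<Union>(e ` (L - I))) = (\<Sum>k\<in>L - I. card (e k))"
  proof (rule card_UN_disjoint)
    show "\<forall>k\<in>L - I. \<forall>l\<in>L - I. k \<noteq> l \<longrightarrow> e k \<inter> e l = {}"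
      using disjoint by blast
  qed (simp_all add: finite_e)
  moreover have "(\<Sum>k\<in>L - I. card (e k)) = 2 * card (L - I)"
    by (simp add: is_H_facts(4)[OF H])
  moreover have "\<Union>(e ` (L \<inter> I)) \<inter> \<Union>(e ` (L - I)) = {}"
  proof -
    have "e k \<inter> e l = {}" if "k \<in> L \<inter> I" "l \<in> L - I" for k l
      using disjoint[of l k] that by auto
    then show ?thesis
      by blast
  qed
  moreover have "\<Union>(e ` L) = \<Union>(e ` (L \<inter> I)) \<union> \<Union>(e ` (L - I))"
    by blast
  ultimately show ?thesis
    unfolding span_size_def using finite_e template_part finite_Gverts by (simp add: card_Un_disjoint)
qed

lemma card_Union_ge_3:
  assumes "inj_on e L" "\<And>k. k \<in> L \<Longrightarrow> card (e k) = 2" "2 \<le> card L"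
  shows "3 \<le> card (\<Union>(e ` L))"
proof -
  have "finite L" "\<not> card L \<le> Suc 0"
    using assms(3) card.infinite by fastforce+
  then obtain k l where kl: "k \<in> L" "l \<in> L" "k \<noteq> l"
    using card_le_Suc0_iff_eq by blast
  have card_kl: "card (e k) = 2" "card (e l) = 2"
    using assms(2) kl by auto
  then have finite_kl: "finite (e k)" "finite (e l)"
    by (auto intro: card_ge_0_finite)
  have "e k \<noteq> e l"
    using inj_onD[OF assms(1) _ kl(1,2)] kl(3) by blast
  then have "\<not> e k \<subseteq> e l"
    using card_subset_eq[OF finite_kl(2)] card_kl by metis
  then have "card (e k \<inter> e l) < card (e k)"
    by (intro psubset_card_mono finite_kl) blast
  then have "3 \<le> card (e k \<union> e l)"
    using card_Un_Int[OF finite_kl] card_kl by simp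
  also have "\<dots> \<le> card (\<Union>(e ` L))"
  proof (rule card_mono)
    have "finite (e j)" if "j \<in> L" for j
      using assms(2)[OF that] by (intro card_ge_0_finite) simp
    then show "finite (\<Union>(e ` L))"
      using \<open>finite L\<close> by blast
    show "e k \<union> e l \<subseteq> \<Union>(e ` L)"
      using kl by blast
  qed
  finally show ?thesis .
qed

lemma span_size_ge_3:
  assumes "is_H n i I V e" "2 \<le> card L"
  shows "3 \<le> span_size i I L"
proof -
  have "3 \<le> card (\<Union>(e ` L))"
    using is_H_inj[OF assms(1)] is_H_facts(4)[OF assms(1)] assms(2)
    by (intro card_Union_ge_3) (auto intro: inj_on_subset)
  then show ?thesis
    by (simp add: card_Union_is_H_edges[OF assms(1)])
qed

section \<open>Analytic estimates\<close>

lemma power_second_order_remainder_bound: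
  fixes a b M :: real
  assumes "0 \<le> a" "a \<le> M" "0 \<le> b" "b \<le> M"
  shows "\<bar>b ^ (k + 2) - a ^ (k + 2) - (real k + 2) * a ^ (k + 1) * (b - a)\<bar>
       \<le> (real k + 1) ^ 2 * M ^ k * (b - a) ^ 2"
proof (induction k)
  case 0
  have "b * b - a * a - 2 * a * (b - a) = (b - a) ^ 2"
    by (simp add: power2_eq_square algebra_simps)
  then show ?case
    by simp
next
  case (Suc k)
  define R where "R = b ^ (k + 2) - a ^ (k + 2) - (real k + 2) * a ^ (k + 1) * (b - a)"
  define Q where "Q = (real k + 2) * a ^ (k + 1) * (b - a) ^ 2"
  define X where "X = M ^ (k + 1) * (b - a) ^ 2"
  have "0 \<le> Q" "0 \<le> X"
    using assms by (simp_all add: Q_def X_def)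
  have "b ^ (Suc k + 2) - a ^ (Suc k + 2) - (real (Suc k) + 2) * a ^ (Suc k + 1) * (b - a) = b * R + Q"
    unfolding R_def Q_def by (simp add: power2_eq_square algebra_simps)
  then have "\<bar>b ^ (Suc k + 2) - a ^ (Suc k + 2) - (real (Suc k) + 2) * a ^ (Suc k + 1) * (b - a)\<bar>
      \<le> \<bar>b * R\<bar> + Q"
    using abs_triangle_ineq[of "b * R" Q] \<open>0 \<le> Q\<close> by simp
  also have "\<dots> \<le> (real k + 1) ^ 2 * X + (real k + 2) * X"
  proof (rule add_mono)
    have "\<bar>b * R\<bar> \<le> M * ((real k + 1) ^ 2 * M ^ k * (b - a) ^ 2)"
      unfolding abs_mult using Suc.IH[folded R_def] assms by (intro mult_mono) simp_all
    then show "\<bar>b * R\<bar> \<le> (real k + 1) ^ 2 * X"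
      by (simp add: X_def algebra_simps)
    have "a ^ (k + 1) \<le> M ^ (k + 1)"
      using assms by (intro power_mono) simp_all
    then show "Q \<le> (real k + 2) * X"
      unfolding Q_def X_def mult.assoc by (intro mult_left_mono mult_right_mono) simp_all
  qed
  also have "\<dots> = ((real k + 1) ^ 2 + (real k + 2)) * X"
    by (simp add: algebra_simps)
  also have "\<dots> \<le> (real (Suc k) + 1) ^ 2 * X"
    using \<open>0 \<le> X\<close> by (intro mult_right_mono) (simp_all add: power2_eq_square algebra_simps)
  finally show ?case
    by (simp add: X_def mult.assoc)
qed

lemma power_linearisation_error_le:
  fixes a b M \<delta> :: real
  assumes "0 \<le> a" "a \<le> M" "0 \<le> b" "b \<le> M" "\<bar>b - a\<bar> \<le> \<delta>" "2 \<le> m"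
  shows "\<bar>b ^ m - a ^ m - real m * a ^ (m - 1) * (b - a)\<bar> \<le> real m ^ 2 * M ^ (m - 2) * \<delta> ^ 2"
proof -
  obtain k where m: "m = k + 2"
    using \<open>2 \<le> m\<close> by (metis add.commute le_Suc_ex numeral_2_eq_2)
  have "\<bar>b ^ m - a ^ m - real m * a ^ (m - 1) * (b - a)\<bar> \<le> (real k + 1) ^ 2 * M ^ k * (b - a) ^ 2"
    using power_second_order_remainder_bound[OF assms(1-4), of k] by (simp add: m add.commute)
  also have "\<dots> \<le> real m ^ 2 * M ^ k * \<delta> ^ 2"
  proof (intro mult_mono)
    show "(real k + 1) ^ 2 \<le> real m ^ 2"
      unfolding m by (intro power_mono) simp_all
    have "\<bar>b - a\<bar> \<le> \<bar>\<delta>\<bar>"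
      using assms(5) by linarith
    then show "(b - a) ^ 2 \<le> \<delta> ^ 2"
      by (simp add: abs_le_square_iff)
  qed (use assms in simp_all)
  finally show ?thesis
    by (simp add: m)
qed

lemma alternating_power_sum_linearisation:
  fixes c Y :: "'i \<Rightarrow> real" and a M \<delta> :: real
  assumes "finite S" "sum c S = 0" and c: "\<And>I. I \<in> S \<Longrightarrow> \<bar>c I\<bar> \<le> 1"
    and a: "0 \<le> a" "a \<le> 1" "a \<le> M"
    and Y: "\<And>I. I \<in> S \<Longrightarrow> 0 \<le> Y I \<and> Y I \<le> M \<and> \<bar>Y I - a\<bar> \<le> \<delta>"
    and "2 \<le> m"
  shows "\<bar>\<Sum>I\<in>S. c I * Y I ^ m\<bar>
       \<le> real (card S) * real m ^ 2 * M ^ (m - 2) * \<delta> ^ 2 + real m * M ^ (m - 2) * \<bar>\<Sum>I\<in>S. c I * Y I\<bar>"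
proof -
  define R where "R I = Y I ^ m - a ^ m - real m * a ^ (m - 1) * (Y I - a)" for I
  have "(\<Sum>I\<in>S. c I * Y I ^ m)
      = (\<Sum>I\<in>S. c I * R I) + (a ^ m - real m * a ^ (m - 1) * a) * sum c S
        + real m * a ^ (m - 1) * (\<Sum>I\<in>S. c I * Y I)"
    by (simp add: R_def algebra_simps sum.distrib sum_distrib_left sum_distrib_right sum_subtractf)
  then have split: "(\<Sum>I\<in>S. c I * Y I ^ m) = (\<Sum>I\<in>S. c I * R I) + real m * a ^ (m - 1) * (\<Sum>I\<in>S. c I * Y I)"
    using \<open>sum c S = 0\<close> by simp
  have "\<bar>c I * R I\<bar> \<le> real m ^ 2 * M ^ (m - 2) * \<delta> ^ 2" if "I \<in> S" for I
  proof -
    have "\<bar>c I * R I\<bar> \<le> \<bar>R I\<bar>"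
      unfolding abs_mult using c[OF that] by (simp add: mult_left_le_one_le)
    also have "\<dots> \<le> real m ^ 2 * M ^ (m - 2) * \<delta> ^ 2"
      unfolding R_def using a Y[OF that] \<open>2 \<le> m\<close> by (intro power_linearisation_error_le) auto
    finally show ?thesis .
  qed
  then have "(\<Sum>I\<in>S. \<bar>c I * R I\<bar>) \<le> real (card S) * (real m ^ 2 * M ^ (m - 2) * \<delta> ^ 2)"
    by (intro sum_bounded_above)
  then have "\<bar>\<Sum>I\<in>S. c I * R I\<bar> \<le> real (card S) * (real m ^ 2 * M ^ (m - 2) * \<delta> ^ 2)"
    using sum_abs[of "\<lambda>I. c I * R I" S] by linarith
  moreover have "real m * a ^ (m - 1) \<le> real m * M ^ (m - 2)"
  proof -
    have "a ^ (m - 1) \<le> a ^ (m - 2)"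
      using a \<open>2 \<le> m\<close> by (intro power_decreasing) simp_all
    also have "\<dots> \<le> M ^ (m - 2)"
      using a by (intro power_mono)
    finally show ?thesis
      by (rule mult_left_mono) simp
  qed
  then have "\<bar>real m * a ^ (m - 1) * (\<Sum>I\<in>S. c I * Y I)\<bar> \<le> real m * M ^ (m - 2) * \<bar>\<Sum>I\<in>S. c I * Y I\<bar>"
    unfolding abs_mult using a by (simp add: mult_right_mono)
  ultimately show ?thesis
    unfolding split using abs_triangle_ineq by (smt (verit) mult.assoc)
qed

lemma power_le_exp_mult:
  fixes M :: real
  assumes "0 \<le> M"
  shows "M ^ k \<le> exp (k * (M - 1))"
proof -
  have "M ^ k \<le> exp (M - 1) ^ k"
    using assms exp_ge_add_one_self[of "M - 1"] by (intro power_mono) simp_all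
  then show ?thesis
    by (simp add: exp_of_nat_mult)
qed

lemma power_minus_two_le_exp:
  fixes p M :: real
  assumes "0 \<le> M" "M \<le> 1 - 4 * p ^ 2 + 39 * p ^ 3" "0 \<le> p" "p \<le> 1" "2 \<le> m" "real m * p ^ 3 \<le> 1"
  shows "M ^ (m - 2) \<le> exp 47 * exp (- 4 * real m * p ^ 2)"
proof -
  have "M ^ (m - 2) \<le> exp (real (m - 2) * (M - 1))"
    using power_le_exp_mult[OF assms(1)] .
  also have "\<dots> \<le> exp (47 + (- 4 * real m * p ^ 2))"
  proof -
    have "p ^ 2 \<le> 1" "0 \<le> p ^ 3"
      using assms(3,4) by (simp_all add: power_le_one)
    moreover have "real (m - 2) * (1 - 4 * p ^ 2 + 39 * p ^ 3 - 1)
        = - 4 * real m * p ^ 2 + 8 * p ^ 2 + 39 * (real m * p ^ 3) - 78 * p ^ 3"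
      using \<open>2 \<le> m\<close> by (simp add: of_nat_diff algebra_simps)
    moreover have "real (m - 2) * (M - 1) \<le> real (m - 2) * (1 - 4 * p ^ 2 + 39 * p ^ 3 - 1)"
      using assms(2) by (intro mult_left_mono) simp_all
    ultimately have "real (m - 2) * (M - 1) \<le> 47 + (- 4 * real m * p ^ 2)"
      using assms(6) by linarith
    then show ?thesis
      by simp
  qed
  finally show ?thesis
    by (simp only: exp_add)
qed

lemma one_minus_square_power_4_le:
  fixes p :: real
  assumes "0 \<le> p" "p \<le> 1"
  shows "(1 - p ^ 2) ^ 4 \<le> 1 - 4 * p ^ 2 + 7 * p ^ 3"
proof -
  have "p ^ 4 \<le> p ^ 3" "p ^ 8 \<le> p ^ 3" "0 \<le> p ^ 6"
    using assms by (auto intro: power_decreasing)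
  moreover have "(1 - p ^ 2) ^ 4 = 1 - 4 * p ^ 2 + 6 * p ^ 4 - 4 * p ^ 6 + p ^ 8"
    by (simp add: power2_eq_square power4_eq_xxxx algebra_simps power_numeral_reduce)
  ultimately show ?thesis
    by linarith
qed

lemma alternating_power_sum_bound:
  fixes Y :: "lab set \<Rightarrow> real" and p :: real
  assumes Y: "\<And>I. 0 \<le> Y I \<and> Y I \<le> 1" "\<And>I. \<bar>Y I - Y {}\<bar> \<le> 32 * p ^ 3"
    and Y_empty: "Y {} = (1 - p ^ 2) ^ 4"
    and first_order: "\<bar>\<Sum>I\<in>Pow UNIV. (-1) ^ card I * Y I\<bar> \<le> 16 * p ^ q"
    and p: "0 \<le> p" "p \<le> 1" and "2 \<le> m" and mp: "real m * p ^ 3 \<le> 1"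
  shows "\<bar>\<Sum>I\<in>Pow UNIV. (-1) ^ card I * Y I ^ m\<bar>
     \<le> 16384 * exp 47 * (real m * p ^ q * exp (- 4 * real m * p ^ 2)
                         + (real m * p ^ 3) ^ 2 * exp (- 4 * real m * p ^ 2))"
proof -
  define M where "M = 1 - 4 * p ^ 2 + 39 * p ^ 3"
  define E where "E = exp (- 4 * real m * p ^ 2)"
  have "Y {} \<le> 1 - 4 * p ^ 2 + 7 * p ^ 3" "0 \<le> p ^ 3"
    using one_minus_square_power_4_le[OF p] p by (simp_all add: Y_empty)
  then have Y_le_M: "Y I \<le> M" "Y {} \<le> M" for I
    using Y(2)[of I] \<open>0 \<le> p ^ 3\<close> unfolding M_def by (simp_all add: abs_le_iff)
  have "0 \<le> M"
    using Y(1)[of "{}"] Y_le_M(2) by linarith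
  then have M_pow: "M ^ (m - 2) \<le> exp 47 * E"
    unfolding E_def using p \<open>2 \<le> m\<close> mp by (intro power_minus_two_le_exp) (simp_all add: M_def)
  have "0 \<le> E"
    by (simp add: E_def)
  have "(\<Sum>I\<in>Pow (UNIV :: lab set). (-1::real) ^ card I) = 0"
    using sum_Pow_alternating_eq_0[of UNIV L11 "\<lambda>_. 1 :: real"] by simp
  then have "\<bar>\<Sum>I\<in>Pow UNIV. (-1) ^ card I * Y I ^ m\<bar>
      \<le> real (card (Pow (UNIV :: lab set))) * real m ^ 2 * M ^ (m - 2) * (32 * p ^ 3) ^ 2
        + real m * M ^ (m - 2) * \<bar>\<Sum>I\<in>Pow UNIV. (-1) ^ card I * Y I\<bar>"
    using Y Y_le_M \<open>2 \<le> m\<close>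
    by (intro alternating_power_sum_linearisation[where a = "Y {}"]) auto
  also have "\<dots> \<le> 16 * m ^ 2 * (exp 47 * E) * (1024 * p ^ 6) + m * (exp 47 * E) * (16 * p ^ q)"
    using M_pow first_order p \<open>0 \<le> M\<close> \<open>0 \<le> E\<close>
    by (intro add_mono mult_mono) (simp_all add: card_Pow CARD_lab power_mult_distrib flip: power_mult)
  also have "\<dots> = 16384 * exp 47 * ((m * p ^ 3) ^ 2 * E) + 16 * (m * exp 47 * E * p ^ q)"
    by (simp add: power_mult_distrib power_mult[symmetric] algebra_simps)
  also have "\<dots> \<le> 16384 * exp 47 * (m * p ^ q * E + (m * p ^ 3) ^ 2 * E)"
  proof -
    have "0 \<le> m * exp 47 * E * p ^ q"
      using p \<open>0 \<le> E\<close> by simp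
    then show ?thesis
      by (simp add: algebra_simps)
  qed
  finally show ?thesis
    unfolding E_def .
qed

section \<open>Alternating sums over I\<close>

text \<open>
  The paper's x_K for H_{i,I}: the probability that one attribute's trace lies in
  avoiding_traces. The exponent 6 is |V(H)| - 2, the subtracted traces being single edges.
\<close>

definition avoid_weight :: "nat \<Rightarrow> real \<Rightarrow> lab set \<Rightarrow> lab set \<Rightarrow> lab set \<Rightarrow> real" where
  "avoid_weight i p J K I =
     (\<Sum>L\<in>Pow (K \<inter> J). (-1) ^ card L * p ^ span_size i I L)
     - real (card (sym_diff J K)) * (p ^ 2 * (1 - p) ^ 6)"

lemma avoid_weight_insert:
  assumes "a \<notin> K \<inter> J"
  shows "avoid_weight i p J K (insert a I) = avoid_weight i p J K I"
proof -
  have "span_size i (insert a I) L = span_size i I L" if "L \<in> Pow (K \<inter> J)" for L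
    using that assms by (intro span_size_insert) auto
  then have "(\<Sum>L\<in>Pow (K \<inter> J). (-1) ^ card L * p ^ span_size i (insert a I) L)
      = (\<Sum>L\<in>Pow (K \<inter> J). (-1) ^ card L * p ^ span_size i I L)"
    by (intro sum.cong) simp_all
  then show ?thesis
    by (simp add: avoid_weight_def)
qed

lemma sum_trace_weight_avoiding_traces_is_H:
  assumes H: "is_H n i I V e" and p: "0 \<le> p" "p \<le> 1"
  shows "(\<Sum>S\<in>avoiding_traces V e J K. trace_weight p V S) = avoid_weight i p J K I"
  using sum_trace_weight_avoiding_traces[OF is_H_facts(1,3,4)[OF H] is_H_inj[OF H] p]
  by (simp add: avoid_weight_def card_Union_is_H_edges[OF H] is_H_facts(2)[OF H])

lemma pi_family_is_H_eq:
  assumes H: "is_H n i I V e" and p: "0 \<le> p" "p \<le> 1"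
  shows "pi_family n m p V (range e) (CC_J V e J) = (\<Sum>K\<in>Pow UNIV. (-1) ^ card K * avoid_weight i p J K I ^ m)"
  using pi_family_CC_J_eq[OF is_H_facts(1,3,4)[OF H] p] sum_trace_weight_avoiding_traces_is_H[OF H p]
  by simp

lemma alternating_sum_pi_family_eq_0:
  assumes "J \<subset> UNIV" and H: "\<And>I. is_H n i I (V I) (e I)" and p: "0 \<le> p" "p \<le> 1"
  shows "(\<Sum>I\<in>Pow UNIV. (-1) ^ card I * pi_family n m p (V I) (range (e I)) (CC_J (V I) (e I) J)) = 0"
proof -
  obtain a where "a \<notin> J"
    using assms(1) by blast
  have "(\<Sum>I\<in>Pow UNIV. (-1) ^ card I * pi_family n m p (V I) (range (e I)) (CC_J (V I) (e I) J))
      = (\<Sum>I\<in>Pow UNIV. (-1) ^ card I * (\<Sum>K\<in>Pow UNIV. (-1) ^ card K * avoid_weight i p J K I ^ m))"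
    using pi_family_is_H_eq[OF H p] by simp
  also have "\<dots> = 0"
    using \<open>a \<notin> J\<close> by (intro sum_Pow_alternating_eq_0[of UNIV a]) (simp_all add: avoid_weight_insert)
  finally show ?thesis .
qed

lemma alternating_sum_pi_family_CC_UNIV:
  assumes H: "\<And>I. is_H n i I (V I) (e I)" and p: "0 \<le> p" "p \<le> 1"
  shows "(\<Sum>I\<in>Pow UNIV. (-1) ^ card I * pi_family n m p (V I) (range (e I)) (CC_J (V I) (e I) UNIV))
       = (\<Sum>I\<in>Pow UNIV. (-1) ^ card I * avoid_weight i p UNIV UNIV I ^ m)"
proof -
  have "(\<Sum>I\<in>Pow UNIV. (-1) ^ card I * pi_family n m p (V I) (range (e I)) (CC_J (V I) (e I) UNIV))
      = (\<Sum>I\<in>Pow UNIV. (-1) ^ card I * (\<Sum>K\<in>Pow UNIV. (-1) ^ card K * avoid_weight i p UNIV K I ^ m))"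
    using pi_family_is_H_eq[OF H p] by simp
  also have "\<dots> = (-1) ^ CARD(lab) * (\<Sum>I\<in>Pow UNIV. (-1) ^ card I * avoid_weight i p UNIV UNIV I ^ m)"
    by (rule alternating_double_sum_eq_top) (simp add: avoid_weight_insert)
  finally show ?thesis
    by (simp add: CARD_lab)
qed

lemma avoid_weight_UNIV: "avoid_weight i p UNIV UNIV I = (\<Sum>L\<in>Pow UNIV. (-1) ^ card L * p ^ span_size i I L)"
  by (simp add: avoid_weight_def)

lemma avoid_weight_UNIV_bounds:
  assumes H: "is_H n i I V e" and p: "0 \<le> p" "p \<le> 1"
  shows "0 \<le> avoid_weight i p UNIV UNIV I \<and> avoid_weight i p UNIV UNIV I \<le> 1"
proof -
  have "avoid_weight i p UNIV UNIV I = (\<Sum>S\<in>avoiding_traces V e UNIV UNIV. trace_weight p V S)"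
    by (rule sum_trace_weight_avoiding_traces_is_H[OF H p, symmetric])
  also have "\<dots> = measure_pmf.prob (rig n 1 p) {\<omega>. attr_trace V 0 \<omega> \<in> avoiding_traces V e UNIV UNIV}"
    using is_H_facts(1)[OF H] p by (intro sum_trace_weight_eq_prob) (auto simp: avoiding_traces_def)
  finally show ?thesis
    by simp
qed

lemma avoid_weight_UNIV_empty: "avoid_weight i p UNIV UNIV {} = (1 - p ^ 2) ^ 4"
proof -
  have term_eq: "(-1) ^ card L * p ^ span_size i {} L = (\<Prod>k\<in>L. - (p ^ 2)) * (\<Prod>k\<in>UNIV - L. 1)"
    for L :: "lab set"
    by (simp add: span_size_empty power_mult power_mult_distrib[symmetric])
  have "avoid_weight i p UNIV UNIV {} = (\<Sum>L\<in>Pow (UNIV :: lab set). (\<Prod>k\<in>L. - (p ^ 2)) * (\<Prod>k\<in>UNIV - L. 1))"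
    unfolding avoid_weight_UNIV by (intro sum.cong refl term_eq)
  also have "\<dots> = (\<Prod>k\<in>(UNIV :: lab set). - (p ^ 2) + 1)"
    by (rule prod_add[symmetric]) simp
  finally show ?thesis
    by (simp add: CARD_lab)
qed

lemma avoid_weight_UNIV_dist:
  assumes H: "is_H n i I V e" and p: "0 \<le> p" "p \<le> 1"
  shows "\<bar>avoid_weight i p UNIV UNIV I - avoid_weight i p UNIV UNIV {}\<bar> \<le> 32 * p ^ 3"
proof -
  have term_dist: "\<bar>(-1) ^ card L * p ^ span_size i I L - (-1) ^ card L * p ^ span_size i {} L\<bar> \<le> 2 * p ^ 3"
    for L :: "lab set"
  proof (cases "card L \<le> 1")
    case True
    then show ?thesis
      using p by (simp add: span_size_card_le_1)
  next
    case False
    then have "3 \<le> span_size i I L" "3 \<le> span_size i {} L"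
      using span_size_ge_3[OF H] span_size_empty[of i L] by auto
    then have "p ^ span_size i I L \<le> p ^ 3" "p ^ span_size i {} L \<le> p ^ 3"
      using p by (simp_all add: power_decreasing)
    moreover have "0 \<le> p ^ span_size i I L" "0 \<le> p ^ span_size i {} L"
      using p by simp_all
    ultimately show ?thesis
      by (simp add: abs_mult abs_le_iff right_diff_distrib[symmetric])
  qed
  have "\<bar>avoid_weight i p UNIV UNIV I - avoid_weight i p UNIV UNIV {}\<bar>
      \<le> (\<Sum>L\<in>Pow (UNIV :: lab set). \<bar>(-1) ^ card L * p ^ span_size i I L - (-1) ^ card L * p ^ span_size i {} L\<bar>)"
    unfolding avoid_weight_UNIV sum_subtractf[symmetric] by (rule sum_abs)
  also have "\<dots> \<le> (\<Sum>L\<in>Pow (UNIV :: lab set). 2 * p ^ 3)"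
    by (rule sum_mono) (rule term_dist)
  finally show ?thesis
    by (simp add: card_Pow CARD_lab)
qed

lemma alternating_sum_avoid_weight_UNIV_le:
  assumes "0 \<le> p" "p \<le> 1"
  shows "\<bar>\<Sum>I\<in>Pow UNIV. (-1) ^ card I * avoid_weight i p UNIV UNIV I\<bar> \<le> 16 * p ^ (if i = 2 then 4 else 5)"
proof -
  have "(\<Sum>I\<in>Pow UNIV. (-1) ^ card I * avoid_weight i p UNIV UNIV I)
      = (-1) ^ CARD(lab) * (\<Sum>I\<in>Pow UNIV. (-1) ^ card I * p ^ span_size i I UNIV)"
    unfolding avoid_weight_UNIV by (rule alternating_double_sum_eq_top) (simp add: span_size_insert)
  then have "\<bar>\<Sum>I\<in>Pow UNIV. (-1) ^ card I * avoid_weight i p UNIV UNIV I\<bar>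
      \<le> (\<Sum>I\<in>Pow UNIV. \<bar>(-1) ^ card I * p ^ span_size i I UNIV\<bar>)"
    by (simp add: CARD_lab sum_abs)
  also have "\<dots> \<le> (\<Sum>I\<in>Pow (UNIV :: lab set). p ^ (if i = 2 then 4 else 5))"
  proof (rule sum_mono)
    fix I :: "lab set"
    have "p ^ span_size i I UNIV \<le> p ^ (if i = 2 then 4 else 5)"
      using assms span_size_UNIV_ge by (intro power_decreasing)
    then show "\<bar>(-1) ^ card I * p ^ span_size i I UNIV\<bar> \<le> p ^ (if i = 2 then 4 else 5)"
      using assms by (simp add: abs_mult)
  qed
  finally show ?thesis
    by (simp add: card_Pow CARD_lab)
qed

lemma alternating_sum_pi_family_CC_UNIV_le:
  assumes H: "\<And>I. is_H n i I (V I) (e I)" and p: "0 \<le> p" "p \<le> 1"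
    and "2 \<le> m" "real m * p ^ 3 \<le> 1"
  shows "\<bar>\<Sum>I\<in>Pow UNIV. (-1) ^ card I * pi_family n m p (V I) (range (e I)) (CC_J (V I) (e I) UNIV)\<bar>
       \<le> 16384 * exp 47 * (real m * p ^ (if i = 2 then 4 else 5) * exp (- 4 * real m * p ^ 2)
                           + (real m * p ^ 3) ^ 2 * exp (- 4 * real m * p ^ 2))"
  unfolding alternating_sum_pi_family_CC_UNIV[OF H p]
proof (rule alternating_power_sum_bound)
  show "0 \<le> avoid_weight i p UNIV UNIV I \<and> avoid_weight i p UNIV UNIV I \<le> 1" for I
    by (rule avoid_weight_UNIV_bounds[OF H p])
  show "\<bar>avoid_weight i p UNIV UNIV I - avoid_weight i p UNIV UNIV {}\<bar> \<le> 32 * p ^ 3" for I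
    by (rule avoid_weight_UNIV_dist[OF H p])
qed (use avoid_weight_UNIV_empty alternating_sum_avoid_weight_UNIV_le[OF p] p assms in simp_all)

theorem lemma6p3:
  fixes i :: nat
  assumes "i \<in> {1, 2, 3}"
  shows
   "(\<forall>(n::nat) (m::nat) (p::real) (V :: lab set \<Rightarrow> nat set) (e :: lab set \<Rightarrow> lab \<Rightarrow> nat set) (J :: lab set).
       8 \<le> n \<and> 0 \<le> p \<and> p \<le> 1 \<and> J \<subset> UNIV \<and> (\<forall>I. is_H n i I (V I) (e I)) \<longrightarrow>
       (\<Sum>I\<in>Pow UNIV. (-1::real) ^ card I *
          pi_family n m p (V I) (range (e I)) (CC_J (V I) (e I) J)) = 0)
    \<and>
    (\<exists>(m0::nat) (C::real). C > 0 \<and>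
       (\<forall>(n::nat) (m::nat) (p::real) (V :: lab set \<Rightarrow> nat set) (e :: lab set \<Rightarrow> lab \<Rightarrow> nat set).
          8 \<le> n \<and> 0 \<le> p \<and> p \<le> 1 \<and> real m * p ^ 3 \<le> 1 \<and> m > m0 \<and>
          (\<forall>I. is_H n i I (V I) (e I)) \<longrightarrow>
          \<bar>\<Sum>I\<in>Pow UNIV. (-1::real) ^ card I *
             pi_family n m p (V I) (range (e I)) (CC_J (V I) (e I) UNIV)\<bar>
          \<le> (if i = 2
              then C * (real m * p ^ 4 * exp (- 4 * real m * p ^ 2)
                        + (real m * p ^ 3) ^ 2 * exp (- 4 * real m * p ^ 2))
              else C * (real m * p ^ 5 * exp (- 4 * real m * p ^ 2)
                        + (real m * p ^ 3) ^ 2 * exp (- 4 * real m * p ^ 2)))))"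
proof (intro conjI allI impI exI[of _ "1::nat"] exI[of _ "16384 * exp 47"])
  fix n m :: nat and p :: real and V :: "lab set \<Rightarrow> nat set" and e :: "lab set \<Rightarrow> lab \<Rightarrow> nat set" and J :: "lab set"
  assume "8 \<le> n \<and> 0 \<le> p \<and> p \<le> 1 \<and> J \<subset> UNIV \<and> (\<forall>I. is_H n i I (V I) (e I))"
  then show "(\<Sum>I\<in>Pow UNIV. (-1::real) ^ card I * pi_family n m p (V I) (range (e I)) (CC_J (V I) (e I) J)) = 0"
    by (intro alternating_sum_pi_family_eq_0) auto
next
  fix n m :: nat and p :: real and V :: "lab set \<Rightarrow> nat set" and e :: "lab set \<Rightarrow> lab \<Rightarrow> nat set"
  assume "8 \<le> n \<and> 0 \<le> p \<and> p \<le> 1 \<and> real m * p ^ 3 \<le> 1 \<and> m > 1 \<and> (\<forall>I. is_H n i I (V I) (e I))"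
  then have "\<bar>\<Sum>I\<in>Pow UNIV. (-1) ^ card I * pi_family n m p (V I) (range (e I)) (CC_J (V I) (e I) UNIV)\<bar>
      \<le> 16384 * exp 47 * (real m * p ^ (if i = 2 then 4 else 5) * exp (- 4 * real m * p ^ 2)
                           + (real m * p ^ 3) ^ 2 * exp (- 4 * real m * p ^ 2))"
    by (intro alternating_sum_pi_family_CC_UNIV_le) auto
  then show "\<bar>\<Sum>I\<in>Pow UNIV. (-1::real) ^ card I * pi_family n m p (V I) (range (e I)) (CC_J (V I) (e I) UNIV)\<bar>
      \<le> (if i = 2
          then 16384 * exp 47 * (real m * p ^ 4 * exp (- 4 * real m * p ^ 2)
                                 + (real m * p ^ 3) ^ 2 * exp (- 4 * real m * p ^ 2))
          else 16384 * exp 47 * (real m * p ^ 5 * exp (- 4 * real m * p ^ 2)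
                                 + (real m * p ^ 3) ^ 2 * exp (- 4 * real m * p ^ 2)))"
    by (simp only: if_distrib if_distribR)
qed simp

end
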